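(* For each user $i$ let $r_i^{max}=W\log_2(1+k_iP_{max})$, and let user $k$ satisfy $r_k^{max}=\max_i r_i^{max}$. If $B_k/(P_{max}-C_k)\ge 1$, then there exists an optimal solution of the Sum Throughput Maximization Problem (STMP) defined in the context in which $\tau_k=1$, i.e., user $k$ is allocated the entire scheduling frame.
   Context: There are $N$ users, indexed $i=1,\dots,N$, transmitting to a hybrid access point by time division within a scheduling frame of normalized length $1$. Given constants: bandwidth $W>0$; for each user $i$, $k_i>0$, an energy harvesting rate $C_i\ge 0$, an initial battery level $B_i\ge 0$; and a maximum transmit power $P_{max}>0$. STMP is the problem maximize $\sum_{i=1}^{N} W\tau_i\log_2(1+k_iP_i)$ subject to, for all users $i$ (and all $j\neq i$ where relevant): $B_i+C_i\tau_0+C_i\sum_{j=1}^{N}a_{ji}\tau_j+C_i\tau_i-P_i\tau_i\ge 0$ (energy causality), $a_{ij}+a_{ji}=1$, $P_i\le P_{max}$, $\sum_{i=0}^{N}\tau_i\le 1$, over variables $P_i\ge 0$, $\tau_i\ge 0$ ($i=1,\dots,N$), $\tau_0\ge 0$, and $a_{ij}\in\{0,1\}$, where $P_i$ is the transmit power of user $i$, $\tau_i$ its transmission time, $a_{ij}=1$ iff user $i$ is scheduled before user $j$, and $\tau_0$ is an initial waiting time during which all users only harvest energy. *)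

theory Defs
  imports Complex_Main
begin

text \<open>Users are indexed by {1..N}. g i is the constant k_i of the paper (renamed to avoid a
clash with the distinguished user index k). a i j = 1 iff user i is scheduled before user j.\<close>

definition stmp_feasible ::
  "nat \<Rightarrow> (nat \<Rightarrow> real) \<Rightarrow> (nat \<Rightarrow> real) \<Rightarrow> real \<Rightarrow>
   (nat \<Rightarrow> real) \<Rightarrow> (nat \<Rightarrow> real) \<Rightarrow> real \<Rightarrow> (nat \<Rightarrow> nat \<Rightarrow> real) \<Rightarrow> bool" where
  "stmp_feasible N C B Pmax P tau tau0 a \<longleftrightarrow>
     tau0 \<ge> 0 \<and>
     (\<forall>i\<in>{1..N}.
        P i \<ge> 0 \<and> tau i \<ge> 0 \<and> P i \<le> Pmax \<and>
        B i + C i * tau0 + C i * (\<Sum>j\<in>{1..N} - {i}. a j i * tau j) + C i * tau i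
          - P i * tau i \<ge> 0 \<and>
        (\<forall>j\<in>{1..N}. j \<noteq> i \<longrightarrow> a i j \<in> {0, 1} \<and> a i j + a j i = 1)) \<and>
     tau0 + (\<Sum>i\<in>{1..N}. tau i) \<le> 1"

definition stmp_objective ::
  "nat \<Rightarrow> real \<Rightarrow> (nat \<Rightarrow> real) \<Rightarrow> (nat \<Rightarrow> real) \<Rightarrow> (nat \<Rightarrow> real) \<Rightarrow> real" where
  "stmp_objective N W g P tau = (\<Sum>i\<in>{1..N}. W * tau i * log 2 (1 + g i * P i))"

definition stmp_optimal ::
  "nat \<Rightarrow> real \<Rightarrow> (nat \<Rightarrow> real) \<Rightarrow> (nat \<Rightarrow> real) \<Rightarrow> (nat \<Rightarrow> real) \<Rightarrow> real \<Rightarrow>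
   (nat \<Rightarrow> real) \<Rightarrow> (nat \<Rightarrow> real) \<Rightarrow> real \<Rightarrow> (nat \<Rightarrow> nat \<Rightarrow> real) \<Rightarrow> bool" where
  "stmp_optimal N W g C B Pmax P tau tau0 a \<longleftrightarrow>
     stmp_feasible N C B Pmax P tau tau0 a \<and>
     (\<forall>P' tau' tau0' a'. stmp_feasible N C B Pmax P' tau' tau0' a' \<longrightarrow>
        stmp_objective N W g P' tau' \<le> stmp_objective N W g P tau)"

definition rmax :: "real \<Rightarrow> (nat \<Rightarrow> real) \<Rightarrow> real \<Rightarrow> nat \<Rightarrow> real" where
  "rmax W g Pmax i = W * log 2 (1 + g i * Pmax)"

end

theory Submission
  imports Defs
begin

text \<open>Every user's rate is at most its rate at full power, so any feasible schedule earns at most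
the time-weighted average of the r_i^max, which is at most max_i r_i^max = r_k^max because the
transmission times sum to at most 1. Letting user k transmit at P_max for the whole frame earns
exactly r_k^max, and it is energy-feasible because B_k + C_k \<ge> P_max.\<close>

lemma rate_le_rmax:
  assumes "W \<ge> 0" and "g i \<ge> 0" and "0 \<le> p" and "p \<le> Pmax"
  shows "W * log 2 (1 + g i * p) \<le> rmax W g Pmax i"
proof -
  have "0 \<le> g i * p" and "g i * p \<le> g i * Pmax"
    using assms by (simp_all add: mult_left_mono)
  then have "log 2 (1 + g i * p) \<le> log 2 (1 + g i * Pmax)"
    using assms by (subst log_le_cancel_iff) (auto simp: add_pos_nonneg)
  then show ?thesis
    using assms(1) unfolding rmax_def by (simp add: mult_left_mono)
qed

lemma stmp_objective_le_rmax_bound: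
  assumes feasible: "stmp_feasible N C B Pmax P tau tau0 a"
    and "W \<ge> 0" and "\<forall>i\<in>{1..N}. g i \<ge> 0"
    and "r \<ge> 0" and bound: "\<forall>i\<in>{1..N}. rmax W g Pmax i \<le> r"
  shows "stmp_objective N W g P tau \<le> r"
proof -
  have tau_nonneg: "\<forall>i\<in>{1..N}. tau i \<ge> 0" and tau_sum: "(\<Sum>i\<in>{1..N}. tau i) \<le> 1"
    using feasible unfolding stmp_feasible_def by auto
  have term_le: "W * tau i * log 2 (1 + g i * P i) \<le> tau i * r" if i: "i \<in> {1..N}" for i
  proof -
    have "W * log 2 (1 + g i * P i) \<le> rmax W g Pmax i"
      using feasible i assms(2,3) unfolding stmp_feasible_def by (intro rate_le_rmax) auto
    also have "\<dots> \<le> r"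
      using bound i by simp
    finally have "tau i * (W * log 2 (1 + g i * P i)) \<le> tau i * r"
      using tau_nonneg i by (simp add: mult_left_mono)
    then show ?thesis
      by (simp add: ac_simps)
  qed
  have "stmp_objective N W g P tau \<le> (\<Sum>i\<in>{1..N}. tau i) * r"
    unfolding stmp_objective_def sum_distrib_right by (rule sum_mono) (rule term_le)
  also have "\<dots> \<le> r"
    using mult_right_mono[OF tau_sum \<open>r \<ge> 0\<close>] by simp
  finally show ?thesis .
qed

lemma le_add_if_divide_ge_one:
  fixes b c p :: real
  assumes "b \<ge> 0" and "b / (p - c) \<ge> 1"
  shows "p \<le> b + c"
proof (cases "p - c > 0")
  case True
  with assms(2) show ?thesis
    by (simp add: le_divide_eq)
next
  case False
  with assms(1) show ?thesis
    by simp
qed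

lemma single_user_schedule_feasible:
  assumes "\<forall>i\<in>{1..N}. C i \<ge> 0 \<and> B i \<ge> 0" and "Pmax \<ge> 0" and "B k + C k \<ge> Pmax"
  shows "stmp_feasible N C B Pmax (\<lambda>i. if i = k then Pmax else 0) (\<lambda>i. if i = k then 1 else 0) 0
           (\<lambda>i j. if i < j then 1 else 0)"
    (is "stmp_feasible N C B Pmax ?P ?tau 0 ?a")
proof -
  have energy: "B i + C i * 0 + C i * (\<Sum>j\<in>{1..N} - {i}. ?a j i * ?tau j) + C i * ?tau i
                  - ?P i * ?tau i \<ge> 0"
    if i: "i \<in> {1..N}" for i
  proof -
    have "C i * (\<Sum>j\<in>{1..N} - {i}. ?a j i * ?tau j) \<ge> 0"
      using assms(1) i by (intro mult_nonneg_nonneg sum_nonneg) auto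
    moreover have "B i + C i * ?tau i - ?P i * ?tau i \<ge> 0"
      using assms(1,3) i by (cases "i = k") auto
    ultimately show ?thesis
      by simp
  qed
  have order: "?a i j \<in> {0, 1} \<and> ?a i j + ?a j i = 1" if "j \<noteq> i" for i j :: nat
    using that by auto
  have "0 + (\<Sum>i\<in>{1..N}. ?tau i) \<le> 1"
    by simp
  then show ?thesis
    unfolding stmp_feasible_def using energy order assms(2) by simp
qed

lemma single_user_schedule_objective:
  assumes "k \<in> {1..N}"
  shows "stmp_objective N W g (\<lambda>i. if i = k then Pmax else 0) (\<lambda>i. if i = k then 1 else 0)
           = rmax W g Pmax k"
proof -
  have "stmp_objective N W g (\<lambda>i. if i = k then Pmax else 0) (\<lambda>i. if i = k then 1 else 0)
          = (\<Sum>i\<in>{1..N}. if i = k then rmax W g Pmax k else 0)"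
    unfolding stmp_objective_def rmax_def by (rule sum.cong) auto
  then show ?thesis
    using assms by simp
qed

theorem corollary2:
  fixes N k :: nat and W Pmax :: real and g C B :: "nat \<Rightarrow> real"
  assumes "W > 0" and "Pmax > 0"
    and "\<forall>i\<in>{1..N}. g i > 0 \<and> C i \<ge> 0 \<and> B i \<ge> 0"
    and "k \<in> {1..N}"
    and "rmax W g Pmax k = Max (rmax W g Pmax ` {1..N})"
    and "B k / (Pmax - C k) \<ge> 1"
  shows "\<exists>P tau tau0 a. stmp_optimal N W g C B Pmax P tau tau0 a \<and> tau k = 1"
proof -
  let ?P = "\<lambda>i. if i = k then Pmax else 0"
  let ?tau = "\<lambda>i. if i = k then 1 else 0"
  let ?a = "\<lambda>i j :: nat. if i < j then 1 else 0 :: real"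
  have "B k + C k \<ge> Pmax"
    using assms(3,4,6) by (intro le_add_if_divide_ge_one) auto
  then have feasible: "stmp_feasible N C B Pmax ?P ?tau 0 ?a"
    using assms(2,3) by (intro single_user_schedule_feasible) auto
  have "g k > 0"
    using assms(3,4) by auto
  then have "rmax W g Pmax k \<ge> 0"
    using rate_le_rmax[of W g k 0 Pmax] assms(1,2) by simp
  moreover have "\<forall>i\<in>{1..N}. rmax W g Pmax i \<le> rmax W g Pmax k"
    using assms(5) by simp
  ultimately have "stmp_objective N W g P' tau' \<le> stmp_objective N W g ?P ?tau"
    if "stmp_feasible N C B Pmax P' tau' tau0' a'" for P' tau' tau0' a'
    unfolding single_user_schedule_objective[OF assms(4)]
    using that assms(1,3) by (intro stmp_objective_le_rmax_bound) auto
  with feasible have "stmp_optimal N W g C B Pmax ?P ?tau 0 ?a"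
    unfolding stmp_optimal_def by blast
  then show ?thesis
    by (intro exI[of _ ?P] exI[of _ ?tau] exI[of _ 0] exI[of _ ?a] conjI) simp_all
qed

end
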